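(* Let $(X,\nu)$ be a probability space and $g:X\to X$ an invertible (mod $0$) measure preserving transformation. Let $Y$ be a compact Riemannian manifold and for each $x\in X$ let $f_x:Y\to Y$ be a diffeomorphism, depending measurably on $x$; let $F(x,y)=(g(x),f_x(y))$ and let $\mu=\int_X\sigma_x\,d\nu(x)$ be an ergodic $F$-invariant probability measure on $X\times Y$, where the $\sigma_x$ are probability measures on $Y$ with $(f_x)_*\sigma_x=\sigma_{g(x)}$. Let $P\subset X\times Y$ be a measurable subset, let $\pi:X\times Y\to X$ be the projection and $B=\pi(P)$, and for $x\in B$ write $P(x)=P\cap(\{x\}\times Y)$. Assume $\nu(B)=\nu_0>0$ and that there is $\sigma_0>0$ such that $\sigma_x(P(x))>\sigma_0$ for almost every $x\in B$. For almost every $z\in P$ let $n_l(z)$ denote the $l$-th return time of $z$ to $P$ under $F$ (for an integer $l\ge1$). Define $$P_n^l(x)=\{z\in P(x)\,:\,n_l(z)\ge n\},\qquad N_l(x)=\max\{n\,:\,\sigma_x(P_n^l(x))>\sigma_0\}.$$ Then $$\int_B N_l(x)\,d\nu<\frac{l}{\sigma_0}<\infty.$$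
   Context: The $l$-th return time $n_l(z)$ of $z\in P$ is the $l$-th smallest positive integer $n$ with $F^n(z)\in P$. Measures $\sigma_x(P(x))$ are understood by identifying $\{x\}\times Y$ with $Y$. *)

theory Defs
  imports "HOL-Probability.Probability"
begin

definition skew :: "('a \<Rightarrow> 'a) \<Rightarrow> ('a \<Rightarrow> 'b \<Rightarrow> 'b) \<Rightarrow> 'a \<times> 'b \<Rightarrow> 'a \<times> 'b" where
  "skew g f z = (g (fst z), f (fst z) (snd z))"

text \<open>l-th return time of z to P under F: the l-th smallest positive n with
  F^n z in P; infinity if there are fewer than l such n.\<close>
definition return_time :: "('c \<Rightarrow> 'c) \<Rightarrow> 'c set \<Rightarrow> nat \<Rightarrow> 'c \<Rightarrow> enat" where
  "return_time F P l z =
     (if \<exists>n. l \<le> card {k \<in> {1..n}. (F ^^ k) z \<in> P}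
      then enat (LEAST n. l \<le> card {k \<in> {1..n}. (F ^^ k) z \<in> P})
      else \<infinity>)"

definition Pnl :: "('a \<times> 'b \<Rightarrow> 'a \<times> 'b) \<Rightarrow> ('a \<times> 'b) set \<Rightarrow> nat \<Rightarrow> nat \<Rightarrow> 'a \<Rightarrow> 'b set" where
  "Pnl F P l n x = {y. (x, y) \<in> P \<and> enat n \<le> return_time F P l (x, y)}"

text \<open>N_l(x) = max { n : sigma_x(P_n^l(x)) > sigma_0 }, taken as a supremum in enat
  (equal to the maximum whenever it exists, infinity if the set is unbounded).\<close>
definition Nl :: "('a \<times> 'b \<Rightarrow> 'a \<times> 'b) \<Rightarrow> ('a \<times> 'b) set \<Rightarrow> ('a \<Rightarrow> 'b measure) \<Rightarrow> real \<Rightarrow> nat \<Rightarrow> 'a \<Rightarrow> enat" where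
  "Nl F P \<sigma> \<sigma>0 l x = Sup {enat n | n. emeasure (\<sigma> x) (Pnl F P l n x) > ennreal \<sigma>0}"

definition ergodic_for :: "'c measure \<Rightarrow> ('c \<Rightarrow> 'c) \<Rightarrow> bool" where
  "ergodic_for M T \<longleftrightarrow> (\<forall>A \<in> sets M. T -` A \<inter> space M = A \<longrightarrow> emeasure M A = 0 \<or> emeasure M A = 1)"

end

theory Submission
  imports Defs
begin

text \<open>The fibre masses \<open>\<sigma>\<^sub>x(P\<^sub>n\<^sup>l(x))\<close> are non-increasing in \<open>n\<close>, so \<open>N\<^sub>l(x)\<close> is at most the number
  of \<open>n \<ge> 1\<close> with \<open>\<sigma>\<^sub>x(P\<^sub>n\<^sup>l(x)) > \<sigma>\<^sub>0\<close>, hence at most \<open>\<Sum>\<^sub>n \<sigma>\<^sub>x(P\<^sub>n\<^sup>l(x)) / \<sigma>\<^sub>0\<close>, with strict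
  inequality on \<open>B\<close> because there already \<open>\<sigma>\<^sub>x(P\<^sub>1\<^sup>l(x)) = \<sigma>\<^sub>x(P(x)) > \<sigma>\<^sub>0\<close>. Integrating over
  \<open>\<nu>\<close> turns \<open>\<Sum>\<^sub>n \<sigma>\<^sub>x(P\<^sub>n\<^sup>l(x))\<close> into \<open>\<Sum>\<^sub>n \<mu>{z \<in> P. n\<^sub>l(z) \<ge> n}\<close>, which is at most \<open>l\<close> by a
  Kac-type argument: along an orbit segment of length \<open>m\<close> at most \<open>l\<close> visits to \<open>P\<close> have
  their \<open>l\<close>-th return after the end of the segment, and \<open>F\<close> preserves \<open>\<mu>\<close>.\<close>

definition late_returns :: "('c \<Rightarrow> 'c) \<Rightarrow> 'c set \<Rightarrow> nat \<Rightarrow> nat \<Rightarrow> 'c set" where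
  "late_returns T P l n = {z \<in> P. enat n \<le> return_time T P l z}"

lemma Pnl_eq_vimage_late_returns: "Pnl F P l n x = Pair x -` late_returns F P l n"
  by (auto simp: Pnl_def late_returns_def)

lemma late_returns_antimono: "n' \<le> n \<Longrightarrow> late_returns T P l n \<subseteq> late_returns T P l n'"
  by (auto simp: late_returns_def intro: order_trans[of "enat n'" "enat n"])

lemma return_time_ge_Suc_iff:
  "enat (Suc j) \<le> return_time T P l z \<longleftrightarrow> card {k \<in> {1..j}. (T ^^ k) z \<in> P} < l"
proof (cases "\<exists>n. l \<le> card {k \<in> {1..n}. (T ^^ k) z \<in> P}")
  case True
  define L where "L = (LEAST n. l \<le> card {k \<in> {1..n}. (T ^^ k) z \<in> P})"
  have rt: "return_time T P l z = enat L"
    using True by (simp add: return_time_def L_def)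
  have card_mono_n: "card {k \<in> {1..a}. (T ^^ k) z \<in> P} \<le> card {k \<in> {1..b}. (T ^^ k) z \<in> P}"
    if "a \<le> b" for a b
    using that by (intro card_mono) auto
  have "l \<le> card {k \<in> {1..L}. (T ^^ k) z \<in> P}"
    unfolding L_def by (rule LeastI_ex[OF True])
  moreover have "l \<le> card {k \<in> {1..j}. (T ^^ k) z \<in> P} \<Longrightarrow> L \<le> j"
    unfolding L_def by (rule Least_le)
  ultimately have "Suc j \<le> L \<longleftrightarrow> card {k \<in> {1..j}. (T ^^ k) z \<in> P} < l"
    using card_mono_n[of L j] by fastforce
  then show ?thesis
    by (simp add: rt)
next
  case False
  have "return_time T P l z = \<infinity>"
    unfolding return_time_def by (simp only: if_not_P[OF False])
  moreover have "card {k \<in> {1..j}. (T ^^ k) z \<in> P} < l"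
    using False not_le by blast
  ultimately show ?thesis
    by simp
qed

lemma late_returns_Suc_0: "1 \<le> l \<Longrightarrow> late_returns T P l (Suc 0) = P"
  by (auto simp: late_returns_def return_time_ge_Suc_iff)

lemma sets_late_returns [measurable]:
  assumes [measurable]: "T \<in> M \<rightarrow>\<^sub>M M" "P \<in> sets M"
  shows "late_returns T P l n \<in> sets M"
proof (cases n)
  case 0
  then show ?thesis by (simp add: late_returns_def zero_enat_def[symmetric])
next
  case (Suc j)
  have card_eq: "real (card {k \<in> {1..j}. (T ^^ k) z \<in> P}) = (\<Sum>k\<in>{1..j}. indicator P ((T ^^ k) z))"
    for z
    by (simp add: indicator_def Int_def conj_commute)
  have "late_returns T P l n
      = {z \<in> space M. z \<in> P \<and> real (card {k \<in> {1..j}. (T ^^ k) z \<in> P}) < real l}"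
    using sets.sets_into_space[of P M]
    by (auto simp: late_returns_def Suc return_time_ge_Suc_iff)
  also have "\<dots> = {z \<in> space M. z \<in> P \<and> (\<Sum>k\<in>{1..j}. indicator P ((T ^^ k) z)) < real l}"
    unfolding card_eq ..
  also have "\<dots> \<in> sets M"
    by measurable
  finally show ?thesis .
qed

lemma card_few_greater_le:
  fixes V :: "'a::linorder set"
  assumes "finite V"
  shows "card {k \<in> V. card {v \<in> V. k < v} < l} \<le> l"
proof (cases "{k \<in> V. card {v \<in> V. k < v} < l} = {}")
  case False
  define S where "S = {k \<in> V. card {v \<in> V. k < v} < l}"
  have "finite S" "S \<noteq> {}"
    using assms False by (simp_all add: S_def)
  define k0 where "k0 = Min S"
  have k0: "k0 \<in> S"
    using \<open>finite S\<close> \<open>S \<noteq> {}\<close> by (simp add: k0_def)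
  have "S - {k0} \<subseteq> {v \<in> V. k0 < v}"
    using \<open>finite S\<close> by (auto simp: k0_def S_def order.strict_iff_order)
  then have "card (S - {k0}) \<le> card {v \<in> V. k0 < v}"
    using assms by (intro card_mono) auto
  also have "\<dots> < l"
    using k0 by (simp add: S_def)
  finally show ?thesis
    using k0 \<open>finite S\<close> by (simp add: S_def[symmetric] card_Diff_singleton)
next
  case True
  then show ?thesis by (simp only: card.empty)
qed

lemma card_late_returns_along_orbit_le:
  "card {k \<in> {..<m}. (T ^^ k) z \<in> late_returns T P l (m - k)} \<le> l"
proof -
  define V where "V = {v. v < m \<and> (T ^^ v) z \<in> P}"
  have "{k \<in> {..<m}. (T ^^ k) z \<in> late_returns T P l (m - k)} \<subseteq> {k \<in> V. card {v \<in> V. k < v} < l}"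
  proof
    fix k
    assume "k \<in> {k \<in> {..<m}. (T ^^ k) z \<in> late_returns T P l (m - k)}"
    then have k: "k < m" and late: "(T ^^ k) z \<in> late_returns T P l (m - k)"
      by auto
    have "(T ^^ k) z \<in> late_returns T P l (Suc (m - Suc k))"
      using late k by (simp add: Suc_diff_Suc)
    then have few: "card {i \<in> {1..m - Suc k}. (T ^^ i) ((T ^^ k) z) \<in> P} < l"
      using return_time_ge_Suc_iff[of "m - Suc k" T P l "(T ^^ k) z"] by (simp add: late_returns_def)
    have "{v \<in> V. k < v} \<subseteq> (\<lambda>i. i + k) ` {i \<in> {1..m - Suc k}. (T ^^ i) ((T ^^ k) z) \<in> P}"
    proof
      fix v
      assume v: "v \<in> {v \<in> V. k < v}"
      then have "(T ^^ (v - k)) ((T ^^ k) z) = (T ^^ v) z"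
        using funpow_add[of "v - k" k T] by simp
      with v show "v \<in> (\<lambda>i. i + k) ` {i \<in> {1..m - Suc k}. (T ^^ i) ((T ^^ k) z) \<in> P}"
        by (intro image_eqI[of _ _ "v - k"]) (auto simp: V_def)
    qed
    then have "card {v \<in> V. k < v} \<le> card ((\<lambda>i. i + k) ` {i \<in> {1..m - Suc k}. (T ^^ i) ((T ^^ k) z) \<in> P})"
      by (intro card_mono) auto
    also have "\<dots> \<le> card {i \<in> {1..m - Suc k}. (T ^^ i) ((T ^^ k) z) \<in> P}"
      by (rule card_image_le) simp
    finally have "card {v \<in> V. k < v} \<le> card {i \<in> {1..m - Suc k}. (T ^^ i) ((T ^^ k) z) \<in> P}" .
    with few k late show "k \<in> {k \<in> V. card {v \<in> V. k < v} < l}"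
      by (simp add: V_def late_returns_def)
  qed
  then have "card {k \<in> {..<m}. (T ^^ k) z \<in> late_returns T P l (m - k)}
      \<le> card {k \<in> V. card {v \<in> V. k < v} < l}"
    by (intro card_mono) (simp_all add: V_def)
  also have "\<dots> \<le> l"
    by (rule card_few_greater_le) (simp add: V_def)
  finally show ?thesis .
qed

lemma distr_funpow_eq:
  assumes "T \<in> M \<rightarrow>\<^sub>M M" "distr M M T = M"
  shows "distr M M (T ^^ n) = M"
proof (induction n)
  case 0
  then show ?case by (simp add: distr_id2[symmetric] id_def)
next
  case (Suc n)
  have "distr M M (T ^^ Suc n) = distr M M (T ^^ n \<circ> T)"
    by (simp only: funpow_Suc_right)
  also have "\<dots> = distr (distr M M T) M (T ^^ n)"
    using assms by (intro distr_distr[symmetric]) auto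
  also have "\<dots> = M"
    using assms(2) Suc by (simp only:)
  finally show ?case .
qed

lemma late_returns_suminf_le:
  assumes T: "T \<in> M \<rightarrow>\<^sub>M M" "distr M M T = M" and [measurable]: "P \<in> sets M"
  shows "(\<Sum>n. emeasure M (late_returns T P l (Suc n))) \<le> of_nat l * emeasure M (space M)"
  unfolding suminf_eq_SUP
proof (rule SUP_least)
  fix m
  let ?E = "\<lambda>k. late_returns T P l (m - k)"
  have [measurable]: "T \<in> M \<rightarrow>\<^sub>M M"
    using T by simp
  have "(\<Sum>n<m. emeasure M (late_returns T P l (Suc n))) = (\<Sum>k<m. emeasure M (?E k))"
    by (rule sum.reindex_bij_witness[where i="\<lambda>j. m - Suc j" and j="\<lambda>k. m - Suc k"])
      (auto simp: Suc_diff_Suc)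
  also have "\<dots> = (\<Sum>k<m. \<integral>\<^sup>+ z. indicator (?E k) ((T ^^ k) z) \<partial>M)"
  proof (rule sum.cong[OF refl])
    fix k
    have "emeasure M (?E k) = \<integral>\<^sup>+ z. indicator (?E k) z \<partial>distr M M (T ^^ k)"
      using distr_funpow_eq[OF T] by simp
    also have "\<dots> = \<integral>\<^sup>+ z. indicator (?E k) ((T ^^ k) z) \<partial>M"
      by (rule nn_integral_distr) measurable
    finally show "emeasure M (?E k) = \<integral>\<^sup>+ z. indicator (?E k) ((T ^^ k) z) \<partial>M" .
  qed
  also have "\<dots> = \<integral>\<^sup>+ z. (\<Sum>k<m. indicator (?E k) ((T ^^ k) z)) \<partial>M"
    by (rule nn_integral_sum[symmetric]) measurable
  also have "\<dots> \<le> \<integral>\<^sup>+ z. of_nat l \<partial>M"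
  proof (rule nn_integral_mono)
    fix z
    have "(\<Sum>k<m. indicator (?E k) ((T ^^ k) z) :: ennreal)
        = of_nat (card {k \<in> {..<m}. (T ^^ k) z \<in> ?E k})"
      by (simp add: indicator_def Int_def conj_commute)
    also have "\<dots> \<le> of_nat l"
      by (rule of_nat_mono) (rule card_late_returns_along_orbit_le)
    finally show "(\<Sum>k<m. indicator (?E k) ((T ^^ k) z) :: ennreal) \<le> of_nat l" .
  qed
  also have "\<dots> = of_nat l * emeasure M (space M)"
    by simp
  finally show "(\<Sum>n<m. emeasure M (late_returns T P l (Suc n))) \<le> of_nat l * emeasure M (space M)" .
qed

lemma measurable_emeasure_kernel_vimage_Pair:
  assumes "\<kappa> \<in> N \<rightarrow>\<^sub>M subprob_algebra M" "A \<in> sets (N \<Otimes>\<^sub>M M)"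
  shows "(\<lambda>x. emeasure (\<kappa> x) (Pair x -` A)) \<in> borel_measurable N"
proof (rule emeasure_measurable_subprob_algebra2[OF _ assms(1)])
  have "(SIGMA x:space N. Pair x -` A) = A"
    using sets.sets_into_space[OF assms(2)] by (auto simp: space_pair_measure)
  then show "(SIGMA x:space N. Pair x -` A) \<in> sets (N \<Otimes>\<^sub>M M)"
    using assms(2) by simp
qed

lemma Sup_above_threshold_le_count:
  fixes s :: "nat \<Rightarrow> ennreal"
  assumes "antimono s"
  shows "ennreal_of_enat (Sup {enat n | n. c < s n}) \<le> (\<Sum>m. if c < s (Suc m) then 1 else 0)"
  unfolding ennreal_of_enat_Sup
proof (rule SUP_least, safe)
  fix n
  assume n: "c < s n"
  have "(\<Sum>m<n. 1) = (\<Sum>m<n. if c < s (Suc m) then 1 else 0 :: ennreal)"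
  proof (rule sum.cong[OF refl, symmetric])
    fix m
    assume "m \<in> {..<n}"
    then have "s n \<le> s (Suc m)"
      using assms by (simp add: antimonoD)
    with n show "(if c < s (Suc m) then 1 else 0 :: ennreal) = 1"
      by simp
  qed
  also have "\<dots> \<le> (\<Sum>m. if c < s (Suc m) then 1 else 0)"
    by (rule sum_le_suminf) (auto intro: summableI)
  finally show "ennreal_of_enat (enat n) \<le> (\<Sum>m. if c < s (Suc m) then 1 else 0)"
    by simp
qed

lemma suminf_less_suminf_ennreal:
  fixes u v :: "nat \<Rightarrow> ennreal"
  assumes "\<And>m. u m \<le> v m" "u 0 < v 0" "suminf u \<noteq> \<infinity>"
  shows "suminf u < suminf v"
proof -
  have split: "suminf w = w 0 + (\<Sum>m. w (Suc m))" for w :: "nat \<Rightarrow> ennreal"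
    using suminf_offset[of w 1] by (simp add: add.commute)
  have "(\<Sum>m. u (Suc m)) \<noteq> \<infinity>"
    using assms(3) split[of u] by (auto simp: top_add)
  then have "u 0 + (\<Sum>m. u (Suc m)) < v 0 + (\<Sum>m. u (Suc m))"
    using assms(2) by (simp add: add.commute ennreal_add_left_cancel_less)
  also have "\<dots> \<le> v 0 + (\<Sum>m. v (Suc m))"
    using assms(1) by (intro add_left_mono suminf_le) auto
  finally show ?thesis
    by (simp only: split[of u] split[of v])
qed

lemma count_above_threshold_mult_le:
  fixes a :: "nat \<Rightarrow> ennreal"
  shows "c * (\<Sum>m. if c < a m then 1 else 0) \<le> (\<Sum>m. a m)"
proof -
  have "(\<Sum>m. c * (if c < a m then 1 else 0)) \<le> (\<Sum>m. a m)"
    by (intro suminf_le) (auto simp: less_imp_le)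
  then show ?thesis
    by simp
qed

lemma count_above_threshold_mult_less:
  fixes a :: "nat \<Rightarrow> ennreal"
  assumes "c < a 0" "c * (\<Sum>m. if c < a m then 1 else 0) \<noteq> \<infinity>"
  shows "c * (\<Sum>m. if c < a m then 1 else 0) < (\<Sum>m. a m)"
  unfolding ennreal_suminf_cmult[symmetric]
  by (rule suminf_less_suminf_ennreal) (use assms in \<open>auto simp: less_imp_le\<close>)

lemma set_nn_integral_less:
  assumes [measurable]: "f \<in> borel_measurable M" "g \<in> borel_measurable M" "B \<in> sets M"
    and B: "emeasure M B \<noteq> 0" and finite: "(\<integral>\<^sup>+ x \<in> B. f x \<partial>M) \<noteq> \<infinity>"
    and le: "\<And>x. x \<in> B \<Longrightarrow> f x \<le> g x" and less: "AE x in M. x \<in> B \<longrightarrow> f x < g x"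
  shows "(\<integral>\<^sup>+ x \<in> B. f x \<partial>M) < (\<integral>\<^sup>+ x \<in> B. g x \<partial>M)"
proof (rule nn_integral_less)
  show "\<not> (AE x in M. g x * indicator B x \<le> f x * indicator B x)"
  proof
    assume "AE x in M. g x * indicator B x \<le> f x * indicator B x"
    with less have "AE x in M. x \<notin> B"
      by eventually_elim (auto simp: not_le[symmetric])
    moreover have "{x \<in> space M. \<not> x \<notin> B} = B"
      using sets.sets_into_space[OF assms(3)] by auto
    ultimately have "emeasure M B = 0"
      by (rule AE_iff_measurable[OF assms(3), THEN iffD1, rotated])
    with B show False
      by simp
  qed
qed (use finite le in \<open>auto simp: indicator_def\<close>)

lemma nn_integral_count_above_threshold_less:
  fixes a :: "nat \<Rightarrow> 'a \<Rightarrow> ennreal" and c L :: real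
  assumes [measurable]: "\<And>m. a m \<in> borel_measurable M" "B \<in> sets M"
    and "emeasure M B \<noteq> 0" "0 < c"
    and above: "AE x in M. x \<in> B \<longrightarrow> c < a 0 x"
    and total: "(\<integral>\<^sup>+ x. (\<Sum>m. a m x) \<partial>M) \<le> ennreal L"
  shows "(\<integral>\<^sup>+ x \<in> B. (\<Sum>m. if c < a m x then 1 else 0) \<partial>M) < ennreal (L / c)"
proof -
  define count where "count x = (\<Sum>m. if c < a m x then 1 else 0 :: ennreal)" for x
  have [measurable]: "count \<in> borel_measurable M"
    unfolding count_def by measurable
  have "(\<integral>\<^sup>+ x \<in> B. (\<Sum>m. a m x) \<partial>M) \<le> (\<integral>\<^sup>+ x. (\<Sum>m. a m x) \<partial>M)"
    by (intro nn_integral_mono) (simp add: indicator_def)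
  also note total
  finally have upper: "(\<integral>\<^sup>+ x \<in> B. (\<Sum>m. a m x) \<partial>M) \<le> ennreal L" .
  have lower_le: "c * count x \<le> (\<Sum>m. a m x)" for x
    unfolding count_def by (rule count_above_threshold_mult_le)
  then have "(\<integral>\<^sup>+ x \<in> B. c * count x \<partial>M) \<le> (\<integral>\<^sup>+ x \<in> B. (\<Sum>m. a m x) \<partial>M)"
    by (intro nn_integral_mono mult_right_mono) simp_all
  with upper have finite: "(\<integral>\<^sup>+ x \<in> B. c * count x \<partial>M) \<noteq> \<infinity>"
    by (auto simp: top_unique)
  have "AE x in M. c * count x * indicator B x \<noteq> \<infinity>"
    by (rule nn_integral_PInf_AE[OF _ finite]) measurable
  with above have "AE x in M. x \<in> B \<longrightarrow> c * count x < (\<Sum>m. a m x)"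
  proof eventually_elim
    case (elim x)
    then show ?case
      unfolding count_def by (auto intro: count_above_threshold_mult_less)
  qed
  then have "(\<integral>\<^sup>+ x \<in> B. c * count x \<partial>M) < (\<integral>\<^sup>+ x \<in> B. (\<Sum>m. a m x) \<partial>M)"
    using assms(3) finite lower_le by (intro set_nn_integral_less) simp_all
  also have "(\<integral>\<^sup>+ x \<in> B. c * count x \<partial>M) = (\<integral>\<^sup>+ x \<in> B. count x \<partial>M) * ennreal c"
    by (subst nn_integral_multc[symmetric]) (auto simp: mult_ac intro!: nn_integral_cong)
  also note upper
  also have "ennreal L = ennreal (L / c) * ennreal c"
    using \<open>0 < c\<close> by (simp flip: ennreal_mult'')
  finally have less: "(\<integral>\<^sup>+ x \<in> B. count x \<partial>M) * ennreal c < ennreal (L / c) * ennreal c" .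
  have "\<not> ennreal (L / c) \<le> (\<integral>\<^sup>+ x \<in> B. count x \<partial>M)"
  proof
    assume "ennreal (L / c) \<le> (\<integral>\<^sup>+ x \<in> B. count x \<partial>M)"
    then have "ennreal (L / c) * ennreal c \<le> (\<integral>\<^sup>+ x \<in> B. count x \<partial>M) * ennreal c"
      by (rule mult_right_mono) simp
    with less show False
      by simp
  qed
  then show ?thesis
    by (simp add: count_def not_le)
qed

lemma nn_integral_fibres_late_returns_le:
  assumes \<kappa>: "\<kappa> \<in> N \<rightarrow>\<^sub>M subprob_algebra M"
    and sets_eq: "sets \<mu> = sets (N \<Otimes>\<^sub>M M)"
    and disint: "\<forall>A \<in> sets \<mu>. emeasure \<mu> A = (\<integral>\<^sup>+ x. emeasure (\<kappa> x) (Pair x -` A) \<partial>N)"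
    and T: "T \<in> \<mu> \<rightarrow>\<^sub>M \<mu>" "distr \<mu> \<mu> T = \<mu>" and P: "P \<in> sets \<mu>"
  shows "(\<integral>\<^sup>+ x. (\<Sum>m. emeasure (\<kappa> x) (Pair x -` late_returns T P l (Suc m))) \<partial>N)
    \<le> of_nat l * emeasure \<mu> (space \<mu>)"
proof -
  have late_sets: "late_returns T P l n \<in> sets (N \<Otimes>\<^sub>M M)" for n
    using sets_late_returns[OF T(1) P] sets_eq by simp
  have "(\<integral>\<^sup>+ x. (\<Sum>m. emeasure (\<kappa> x) (Pair x -` late_returns T P l (Suc m))) \<partial>N)
      = (\<Sum>m. \<integral>\<^sup>+ x. emeasure (\<kappa> x) (Pair x -` late_returns T P l (Suc m)) \<partial>N)"
    by (rule nn_integral_suminf) (rule measurable_emeasure_kernel_vimage_Pair[OF \<kappa> late_sets])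
  also have "\<dots> = (\<Sum>m. emeasure \<mu> (late_returns T P l (Suc m)))"
    using disint late_sets sets_eq by simp
  also have "\<dots> \<le> of_nat l * emeasure \<mu> (space \<mu>)"
    by (rule late_returns_suminf_le[OF T P])
  finally show ?thesis .
qed

lemma Nl_le_count_above_threshold:
  assumes "\<And>n. Pnl F P l n x \<in> sets (\<sigma> x)"
  shows "ennreal_of_enat (Nl F P \<sigma> c l x)
    \<le> (\<Sum>m. if ennreal c < emeasure (\<sigma> x) (Pnl F P l (Suc m) x) then 1 else 0)"
  unfolding Nl_def
proof (rule Sup_above_threshold_le_count, rule antimonoI)
  show "emeasure (\<sigma> x) (Pnl F P l n x) \<le> emeasure (\<sigma> x) (Pnl F P l m x)" if "m \<le> n" for m n
    unfolding Pnl_eq_vimage_late_returns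
    using that assms[of m] by (intro emeasure_mono vimage_mono late_returns_antimono)
      (simp_all add: Pnl_eq_vimage_late_returns)
qed

theorem theorem3p1:
  fixes \<nu> :: "'a measure" and g :: "'a \<Rightarrow> 'a"
    and f :: "'a \<Rightarrow> 'b::metric_space \<Rightarrow> 'b"
    and \<sigma> :: "'a \<Rightarrow> 'b measure" and \<mu> :: "('a \<times> 'b) measure"
    and P :: "('a \<times> 'b) set" and \<nu>0 \<sigma>0 :: real and l :: nat
  assumes prob: "prob_space \<nu>"
    and g_meas: "g \<in> \<nu> \<rightarrow>\<^sub>M \<nu>" and g_pres: "distr \<nu> \<nu> g = \<nu>"
    and g_inv: "\<exists>g' \<in> \<nu> \<rightarrow>\<^sub>M \<nu>. AE x in \<nu>. g' (g x) = x \<and> g (g' x) = x"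
    and Y_compact: "compact (UNIV :: 'b set)"
    and f_homeo: "\<forall>x \<in> space \<nu>. \<exists>h. homeomorphism UNIV UNIV (f x) h"
    and f_meas: "(\<lambda>z. f (fst z) (snd z)) \<in> \<nu> \<Otimes>\<^sub>M borel \<rightarrow>\<^sub>M borel"
    and \<sigma>_kernel: "\<sigma> \<in> \<nu> \<rightarrow>\<^sub>M prob_algebra borel"
    and \<sigma>_push: "\<forall>x \<in> space \<nu>. distr (\<sigma> x) borel (f x) = \<sigma> (g x)"
    and \<mu>_sets: "sets \<mu> = sets (\<nu> \<Otimes>\<^sub>M borel)"
    and \<mu>_disint: "\<forall>A \<in> sets \<mu>. emeasure \<mu> A = (\<integral>\<^sup>+ x. emeasure (\<sigma> x) (Pair x -` A) \<partial>\<nu>)"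
    and \<mu>_prob: "prob_space \<mu>"
    and F_inv: "skew g f \<in> \<mu> \<rightarrow>\<^sub>M \<mu>" "distr \<mu> \<mu> (skew g f) = \<mu>"
    and F_erg: "ergodic_for \<mu> (skew g f)"
    and P_meas: "P \<in> sets (\<nu> \<Otimes>\<^sub>M borel)"
    and B_meas: "emeasure \<nu> (fst ` P) = ennreal \<nu>0" and \<nu>0_pos: "\<nu>0 > 0"
    and \<sigma>0_pos: "\<sigma>0 > 0"
    and fibres: "AE x in \<nu>. x \<in> fst ` P \<longrightarrow> emeasure (\<sigma> x) (Pair x -` P) > ennreal \<sigma>0"
    and l_pos: "l \<ge> 1"
  shows "(\<integral>\<^sup>+ x \<in> fst ` P. ennreal_of_enat (Nl (skew g f) P \<sigma> \<sigma>0 l x) \<partial>\<nu>)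
           < ennreal (real l / \<sigma>0)
         \<and> ennreal (real l / \<sigma>0) < \<infinity>"
proof -
  let ?F = "skew g f"
  interpret \<mu>: prob_space \<mu>
    by (rule \<mu>_prob)
  have \<sigma>_sub: "\<sigma> \<in> \<nu> \<rightarrow>\<^sub>M subprob_algebra borel"
    by (rule measurable_prob_algebraD[OF \<sigma>_kernel])
  have late_sets: "late_returns ?F P l n \<in> sets (\<nu> \<Otimes>\<^sub>M borel)" for n
    using sets_late_returns[OF F_inv(1), of P l n] P_meas \<mu>_sets by simp
  define s where "s m x = emeasure (\<sigma> x) (Pnl ?F P l (Suc m) x)" for m x
  have [measurable]: "s m \<in> borel_measurable \<nu>" for m
    unfolding s_def Pnl_eq_vimage_late_returns
    by (rule measurable_emeasure_kernel_vimage_Pair[OF \<sigma>_sub late_sets])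
  have total: "(\<integral>\<^sup>+ x. (\<Sum>m. s m x) \<partial>\<nu>) \<le> ennreal (real l)"
    using nn_integral_fibres_late_returns_le[OF \<sigma>_sub \<mu>_sets \<mu>_disint F_inv, of P l] P_meas \<mu>_sets
    by (simp add: s_def Pnl_eq_vimage_late_returns \<mu>.emeasure_space_1 ennreal_of_nat_eq_real_of_nat)
  have B: "fst ` P \<in> sets \<nu>"
    using B_meas \<nu>0_pos emeasure_notin_sets[of "fst ` P" \<nu>] by auto
  have above: "AE x in \<nu>. x \<in> fst ` P \<longrightarrow> ennreal \<sigma>0 < s 0 x"
    using fibres by (simp add: s_def Pnl_eq_vimage_late_returns late_returns_Suc_0[OF l_pos])
  have "Pnl ?F P l n x \<in> sets (\<sigma> x)" if "x \<in> space \<nu>" for n x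
    using measurable_space[OF \<sigma>_kernel that] sets_Pair1[OF late_sets]
    by (simp add: space_prob_algebra Pnl_eq_vimage_late_returns)
  then have "(\<integral>\<^sup>+ x \<in> fst ` P. ennreal_of_enat (Nl ?F P \<sigma> \<sigma>0 l x) \<partial>\<nu>)
      \<le> (\<integral>\<^sup>+ x \<in> fst ` P. (\<Sum>m. if ennreal \<sigma>0 < s m x then 1 else 0) \<partial>\<nu>)"
    unfolding s_def by (intro nn_integral_mono mult_right_mono Nl_le_count_above_threshold) simp_all
  also have "\<dots> < ennreal (real l / \<sigma>0)"
    using nn_integral_count_above_threshold_less[OF _ B _ \<sigma>0_pos above total] B_meas \<nu>0_pos by simp
  finally show ?thesis
    by simp
qed

end
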